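(* As $\varepsilon\to0$, the first order semi-implicit scheme $U^{n+1} = U^n - \Delta t\,\nabla\cdot\hat F(U^n) - \Delta t\,\nabla\cdot\tilde F(U^{n+1})$ is consistent with \begin{align*} \begin{pmatrix} \rho^{n+1,(0)} \\ (\rho \mathbf{u})^{n+1,(0)} \\ \frac{p^{n+1,(0)}}{\gamma - 1} \end{pmatrix} &= \begin{pmatrix} \rho^{n,(0)} \\ (\rho \mathbf{u})^{n,(0)} \\ \frac{p^{n,(0)}}{\gamma - 1} \end{pmatrix} - \Delta t \nabla \cdot \left\{ \begin{pmatrix} \rho^{n,(0)} \mathbf{u}^{n,(0)} \\ \rho^{n,(0)} \mathbf{u}^{n,(0)}\otimes\mathbf{u}^{n,(0)} + p^{n,(0)} \, I \\ \left( \frac {p^{n,(0)}} {\gamma - 1} + p_\infty^{n,(0)} \right) \mathbf{u}^{n,(0)} \end{pmatrix} \right. \\ & \quad \left. + \varepsilon^{-2} \begin{pmatrix} 0 \\ p^{n+1,(0)} \, I \\ 0 \end{pmatrix} + \varepsilon^{-1} \begin{pmatrix} 0 \\ p^{n+1,(1)} \, I \\ 0 \end{pmatrix} + \begin{pmatrix} 0 \\ \left( p^{n+1,(2)} - p^{n+1,(0)} \right) \, I \\ (p^{n+1,(0)}-p_\infty^{n+1,(0)})\mathbf{u}^{n+1,(0)} \end{pmatrix} \right\} + \mathcal O (\varepsilon), \end{align*} where $I$ is the $d\times d$ identity matrix.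
   Context: Consider the non-dimensionalised compressible Euler equations $U_t+\nabla\cdot F(U)=0$ with $U=(\rho,\rho\mathbf u,\rho E)$, $F(U)=(\rho\mathbf u,\ \rho\mathbf u\otimes\mathbf u+\frac{p}{\varepsilon^2}I,\ (\rho E+p)\mathbf u)$, reference Mach number $0<\varepsilon\le1$, equation of state $p=(\gamma-1)(\rho E-\frac{\varepsilon^2}{2}\rho\|\mathbf u\|^2)$, $\gamma>1$. The flux is split as $F=\hat F+\tilde F$ with non-stiff part $\hat F(U)=(\rho\mathbf u,\ \rho\mathbf u\otimes\mathbf u+pI,\ (\rho E+\Pi)\mathbf u)$ and stiff part $\tilde F(U)=(0,\ \frac{1-\varepsilon^2}{\varepsilon^2}pI,\ (p-\Pi)\mathbf u)=(1-\varepsilon^2)(0,\ \frac{p}{\varepsilon^2}I,\ (p-p_\infty)\mathbf u)$, where $\Pi=\varepsilon^2p+(1-\varepsilon^2)p_\infty$ and the reference pressure is $p_\infty(t)=\inf_{\mathbf x}p(\mathbf x,t)$. The time-discrete scheme treats $\hat F$ explicitly and $\tilde F$ implicitly as stated. The numerical solution is expanded asymptotically: $\rho^n=\rho^{n,(0)}+\varepsilon\rho^{n,(1)}+\varepsilon^2\rho^{n,(2)}+\mathcal O(\varepsilon^3)$, and likewise for $\mathbf u^n$, $p^n$ and $p_\infty^n$; consequently $(\rho E)^{n,(0)}=p^{n,(0)}/(\gamma-1)$ and $\Pi^{n,(0)}=p_\infty^{n,(0)}$. *)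

theory Defs
  imports "HOL-Analysis.Analysis" "HOL-Library.Landau_Symbols"
begin

definition pdx :: "'d::finite \<Rightarrow> (real^'d \<Rightarrow> 'b::real_normed_vector) \<Rightarrow> real^'d \<Rightarrow> 'b" where
  "pdx i g x = frechet_derivative g (at x) (axis i 1)"

definition divv :: "(real^'d::finite \<Rightarrow> real^'d) \<Rightarrow> real^'d \<Rightarrow> real" where
  "divv F x = (\<Sum>i\<in>UNIV. pdx i F x $ i)"

definition divm :: "(real^'d::finite \<Rightarrow> real^'d^'d) \<Rightarrow> real^'d \<Rightarrow> real^'d" where
  "divm M x = (\<chi> j. \<Sum>i\<in>UNIV. pdx i M x $ j $ i)"

definition outer :: "real^'d::finite \<Rightarrow> real^'d \<Rightarrow> real^'d^'d" where
  "outer a b = (\<chi> i j. a $ i * b $ j)"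

text \<open>Total energy density rho E from the equation of state
  p = (gamma-1)(rho E - eps^2/2 rho |u|^2).\<close>
definition total_energy :: "real \<Rightarrow> real \<Rightarrow> real \<Rightarrow> real^'d::finite \<Rightarrow> real \<Rightarrow> real" where
  "total_energy \<gamma> \<epsilon> \<rho> u p = p / (\<gamma> - 1) + \<epsilon>\<^sup>2 / 2 * \<rho> * (norm u)\<^sup>2"

definition Pi_fun :: "real \<Rightarrow> real \<Rightarrow> real \<Rightarrow> real" where
  "Pi_fun \<epsilon> p pinf = \<epsilon>\<^sup>2 * p + (1 - \<epsilon>\<^sup>2) * pinf"

definition field_expansion ::
    "(real \<Rightarrow> real^'d::finite \<Rightarrow> 'b::real_normed_vector) \<Rightarrow> (nat \<Rightarrow> real^'d \<Rightarrow> 'b) \<Rightarrow> bool" where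
  "field_expansion f c \<longleftrightarrow>
     (\<forall>\<epsilon>\<in>{0<..1}. \<forall>x. f \<epsilon> differentiable (at x)) \<and>
     (\<forall>k\<le>2. \<forall>x. c k differentiable (at x)) \<and>
     (\<forall>x. (\<lambda>\<epsilon>. norm (f \<epsilon> x - (c 0 x + \<epsilon> *\<^sub>R c 1 x + \<epsilon>\<^sup>2 *\<^sub>R c 2 x)))
            \<in> O[at_right 0](\<lambda>\<epsilon>. \<epsilon> ^ 3)) \<and>
     (\<forall>x i. (\<lambda>\<epsilon>. norm (pdx i (\<lambda>y. f \<epsilon> y - (c 0 y + \<epsilon> *\<^sub>R c 1 y + \<epsilon>\<^sup>2 *\<^sub>R c 2 y)) x))
            \<in> O[at_right 0](\<lambda>\<epsilon>. \<epsilon> ^ 3))"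

text \<open>Expansion of a spatially constant quantity (the reference pressure).\<close>
definition const_expansion :: "(real \<Rightarrow> real) \<Rightarrow> (nat \<Rightarrow> real) \<Rightarrow> bool" where
  "const_expansion f c \<longleftrightarrow>
     (\<lambda>\<epsilon>. norm (f \<epsilon> - (c 0 + \<epsilon> * c 1 + \<epsilon>\<^sup>2 * c 2))) \<in> O[at_right 0](\<lambda>\<epsilon>. \<epsilon> ^ 3)"

end

theory Submission
  imports Defs
begin

text \<open>Under the assumed expansions, each field,
  together with its first partial derivatives, equals its leading coefficient up to \<open>O(\<epsilon>)\<close>
  as \<open>\<epsilon> \<rightarrow> 0+\<close>, and this is preserved by sums and by bounded bilinear products (products,
  scalings, inner and outer products), hence by the fluxes and their divergences. The mass and
  energy updates then become identities between limits of both sides, which are the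
  \<open>\<epsilon>\<close>-independent leading order equations. In the momentum update the stiff term
  \<open>(1 - \<epsilon>\<^sup>2) / \<epsilon>\<^sup>2 \<nabla>p\<^sup>n\<^sup>+\<^sup>1\<close> is expanded instead, using the \<open>O(\<epsilon>\<^sup>3)\<close> control of the
  gradient remainder; this produces the \<open>\<epsilon>\<^sup>-\<^sup>2\<close>, \<open>\<epsilon>\<^sup>-\<^sup>1\<close> and \<open>\<epsilon>\<^sup>0\<close> pressure terms up to \<open>O(\<epsilon>)\<close>.\<close>

definition lin_approx :: "(real \<Rightarrow> 'a::real_normed_vector) \<Rightarrow> 'a \<Rightarrow> bool" where
  "lin_approx f c \<longleftrightarrow> (\<lambda>\<epsilon>. norm (f \<epsilon> - c)) \<in> O[at_right 0](\<lambda>\<epsilon>. \<epsilon>)"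

lemma eventually_at_right_0_unit: "eventually (\<lambda>\<epsilon>::real. \<epsilon> \<in> {0<..1}) (at_right 0)"
  unfolding eventually_at_right_field by (intro exI[of _ 1]) auto

lemma lin_approxI:
  assumes "eventually (\<lambda>\<epsilon>. norm (f \<epsilon> - c) \<le> C * \<epsilon>) (at_right 0)"
  shows "lin_approx f c"
proof -
  have "eventually (\<lambda>\<epsilon>. norm (norm (f \<epsilon> - c)) \<le> C * norm \<epsilon>) (at_right 0)"
    using assms eventually_at_right_0_unit by eventually_elim auto
  then show ?thesis
    unfolding lin_approx_def by blast
qed

lemma lin_approxE:
  assumes "lin_approx f c"
  obtains C where "C > 0" "eventually (\<lambda>\<epsilon>. norm (f \<epsilon> - c) \<le> C * \<epsilon>) (at_right 0)"
proof -
  obtain C where C: "C > 0" "eventually (\<lambda>\<epsilon>. norm (norm (f \<epsilon> - c)) \<le> C * norm \<epsilon>) (at_right 0)"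
    using assms unfolding lin_approx_def by (elim landau_o.bigE)
  have "eventually (\<lambda>\<epsilon>. norm (f \<epsilon> - c) \<le> C * \<epsilon>) (at_right 0)"
    using C(2) eventually_at_right_0_unit by eventually_elim auto
  with C(1) show thesis by (rule that)
qed

lemma lin_approx_const: "lin_approx (\<lambda>_. c) c"
  by (rule lin_approxI[of _ _ 0]) simp

lemma lin_approx_ident: "lin_approx (\<lambda>\<epsilon>. \<epsilon>) (0::real)"
  by (rule lin_approxI[of _ _ 1]) (use eventually_at_right_0_unit in \<open>auto elim: eventually_mono\<close>)

lemma lin_approx_cong:
  assumes "lin_approx f c" "eventually (\<lambda>\<epsilon>. f \<epsilon> = g \<epsilon>) (at_right 0)"
  shows "lin_approx g c"
proof -
  obtain C where "eventually (\<lambda>\<epsilon>. norm (f \<epsilon> - c) \<le> C * \<epsilon>) (at_right 0)"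
    using assms(1) by (blast elim: lin_approxE)
  with assms(2) have "eventually (\<lambda>\<epsilon>. norm (g \<epsilon> - c) \<le> C * \<epsilon>) (at_right 0)"
    by eventually_elim simp
  then show ?thesis by (rule lin_approxI)
qed

lemma lin_approx_add:
  assumes "lin_approx f a" "lin_approx g b"
  shows "lin_approx (\<lambda>\<epsilon>. f \<epsilon> + g \<epsilon>) (a + b)"
proof -
  obtain C where C: "eventually (\<lambda>\<epsilon>. norm (f \<epsilon> - a) \<le> C * \<epsilon>) (at_right 0)"
    using assms(1) by (blast elim: lin_approxE)
  obtain D where D: "eventually (\<lambda>\<epsilon>. norm (g \<epsilon> - b) \<le> D * \<epsilon>) (at_right 0)"
    using assms(2) by (blast elim: lin_approxE)
  from C D have "eventually (\<lambda>\<epsilon>. norm (f \<epsilon> + g \<epsilon> - (a + b)) \<le> (C + D) * \<epsilon>) (at_right 0)"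
  proof eventually_elim
    case (elim \<epsilon>)
    have "norm (f \<epsilon> + g \<epsilon> - (a + b)) \<le> norm (f \<epsilon> - a) + norm (g \<epsilon> - b)"
      by (metis add_diff_add norm_triangle_ineq)
    with elim show ?case by (simp add: distrib_right)
  qed
  then show ?thesis by (rule lin_approxI)
qed

lemma lin_approx_minus: "lin_approx f a \<Longrightarrow> lin_approx (\<lambda>\<epsilon>. - f \<epsilon>) (- a)"
  unfolding lin_approx_def by (simp add: norm_minus_commute)

lemma lin_approx_diff:
  "lin_approx f a \<Longrightarrow> lin_approx g b \<Longrightarrow> lin_approx (\<lambda>\<epsilon>. f \<epsilon> - g \<epsilon>) (a - b)"
  using lin_approx_add[OF _ lin_approx_minus] by fastforce

lemma lin_approx_sum:
  "finite A \<Longrightarrow> (\<And>i. i \<in> A \<Longrightarrow> lin_approx (f i) (c i))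
    \<Longrightarrow> lin_approx (\<lambda>\<epsilon>. \<Sum>i\<in>A. f i \<epsilon>) (\<Sum>i\<in>A. c i)"
  by (induction A rule: finite_induct) (auto intro: lin_approx_add lin_approx_const[of 0, simplified])

lemma lin_approx_bilinear:
  assumes "bounded_bilinear pr" and f: "lin_approx f a" and g: "lin_approx g b"
  shows "lin_approx (\<lambda>\<epsilon>. pr (f \<epsilon>) (g \<epsilon>)) (pr a b)"
proof -
  interpret bounded_bilinear pr by fact
  obtain K where K: "K > 0" "\<And>x y. norm (pr x y) \<le> norm x * norm y * K"
    using pos_bounded by blast
  obtain C where C: "eventually (\<lambda>\<epsilon>. norm (f \<epsilon> - a) \<le> C * \<epsilon>) (at_right 0)"
    using f by (blast elim: lin_approxE)
  obtain D where D: "D > 0" "eventually (\<lambda>\<epsilon>. norm (g \<epsilon> - b) \<le> D * \<epsilon>) (at_right 0)"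
    using g by (rule lin_approxE)
  have "eventually (\<lambda>\<epsilon>. norm (pr (f \<epsilon>) (g \<epsilon>) - pr a b)
          \<le> (C * (norm b + D) + norm a * D) * K * \<epsilon>) (at_right 0)"
    using C D(2) eventually_at_right_0_unit
  proof eventually_elim
    case (elim \<epsilon>)
    have "D * \<epsilon> \<le> D"
      using elim D(1) by (simp add: mult_left_le)
    then have g_bound: "norm (g \<epsilon>) \<le> norm b + D"
      using norm_triangle_sub[of "g \<epsilon>" b] elim by linarith
    have C_nonneg: "0 \<le> C * \<epsilon>"
      using elim(1) norm_ge_zero order_trans by blast
    have "pr (f \<epsilon>) (g \<epsilon>) - pr a b = pr (f \<epsilon> - a) (g \<epsilon>) + pr a (g \<epsilon> - b)"
      by (simp add: diff_left diff_right)
    then have "norm (pr (f \<epsilon>) (g \<epsilon>) - pr a b) \<le> norm (pr (f \<epsilon> - a) (g \<epsilon>)) + norm (pr a (g \<epsilon> - b))"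
      by (simp only: norm_triangle_ineq)
    also have "\<dots> \<le> norm (f \<epsilon> - a) * norm (g \<epsilon>) * K + norm a * norm (g \<epsilon> - b) * K"
      using K(2) by (intro add_mono)
    also have "\<dots> \<le> (C * \<epsilon>) * (norm b + D) * K + norm a * (D * \<epsilon>) * K"
      using elim g_bound K(1) C_nonneg
      by (intro add_mono mult_right_mono mult_mono mult_left_mono) auto
    finally show ?case by (simp add: algebra_simps)
  qed
  then show ?thesis by (rule lin_approxI)
qed

lemma lin_approx_mult: "lin_approx f a \<Longrightarrow> lin_approx g b \<Longrightarrow> lin_approx (\<lambda>\<epsilon>. f \<epsilon> * g \<epsilon>) (a * b :: real)"
  by (rule lin_approx_bilinear[OF bounded_bilinear_mult])

lemma lin_approx_scaleR: "lin_approx f a \<Longrightarrow> lin_approx g b \<Longrightarrow> lin_approx (\<lambda>\<epsilon>. f \<epsilon> *\<^sub>R g \<epsilon>) (a *\<^sub>R b)"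
  by (rule lin_approx_bilinear[OF bounded_bilinear_scaleR])

lemma lin_approx_power: "0 < n \<Longrightarrow> lin_approx (\<lambda>\<epsilon>. \<epsilon> ^ n) (0::real)"
proof (induction n)
  case (Suc n)
  show ?case
  proof (cases "n = 0")
    case True
    then show ?thesis using lin_approx_ident by simp
  next
    case False
    then show ?thesis using lin_approx_mult[OF lin_approx_ident Suc.IH] by simp
  qed
qed simp

lemma lin_approx_nth:
  assumes "lin_approx f c"
  shows "lin_approx (\<lambda>\<epsilon>. f \<epsilon> $ j) (c $ j)"
proof -
  obtain C where "eventually (\<lambda>\<epsilon>. norm (f \<epsilon> - c) \<le> C * \<epsilon>) (at_right 0)"
    using assms by (blast elim: lin_approxE)
  then have "eventually (\<lambda>\<epsilon>. norm (f \<epsilon> $ j - c $ j) \<le> C * \<epsilon>) (at_right 0)"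
  proof eventually_elim
    case (elim \<epsilon>)
    have "norm (f \<epsilon> $ j - c $ j) \<le> norm (f \<epsilon> - c)"
      using Finite_Cartesian_Product.norm_nth_le[of "f \<epsilon> - c" j] by simp
    with elim show ?case by linarith
  qed
  then show ?thesis by (rule lin_approxI)
qed

lemma lin_approx_vec:
  fixes f :: "real \<Rightarrow> real^'n::finite"
  assumes "\<And>j. lin_approx (\<lambda>\<epsilon>. f \<epsilon> $ j) (c $ j)"
  shows "lin_approx f c"
proof -
  have "\<forall>j. \<exists>C. eventually (\<lambda>\<epsilon>. norm (f \<epsilon> $ j - c $ j) \<le> C * \<epsilon>) (at_right 0)"
    using assms by (blast elim: lin_approxE)
  then obtain C where "\<forall>j. eventually (\<lambda>\<epsilon>. norm (f \<epsilon> $ j - c $ j) \<le> C j * \<epsilon>) (at_right 0)"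
    by metis
  then have "eventually (\<lambda>\<epsilon>. \<forall>j. norm (f \<epsilon> $ j - c $ j) \<le> C j * \<epsilon>) (at_right 0)"
    by (simp add: eventually_all_finite)
  then have "eventually (\<lambda>\<epsilon>. norm (f \<epsilon> - c) \<le> (\<Sum>j\<in>UNIV. C j) * \<epsilon>) (at_right 0)"
  proof eventually_elim
    case (elim \<epsilon>)
    have "norm (f \<epsilon> - c) \<le> (\<Sum>j\<in>UNIV. \<bar>(f \<epsilon> - c) $ j\<bar>)"
      by (rule norm_le_l1_cart)
    also have "\<dots> \<le> (\<Sum>j\<in>UNIV. C j * \<epsilon>)"
      using elim by (intro sum_mono) auto
    finally show ?case
      by (simp add: sum_distrib_right)
  qed
  then show ?thesis by (rule lin_approxI)
qed

lemma lin_approx_unique: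
  assumes "lin_approx f a" "lin_approx g b" "eventually (\<lambda>\<epsilon>. f \<epsilon> = g \<epsilon>) (at_right 0)"
  shows "a = b"
proof -
  obtain C where C: "eventually (\<lambda>\<epsilon>. norm (f \<epsilon> - a) \<le> C * \<epsilon>) (at_right 0)"
    using assms(1) by (blast elim: lin_approxE)
  obtain D where D: "eventually (\<lambda>\<epsilon>. norm (g \<epsilon> - b) \<le> D * \<epsilon>) (at_right 0)"
    using assms(2) by (blast elim: lin_approxE)
  from C D assms(3) have "eventually (\<lambda>\<epsilon>. norm (a - b) \<le> (C + D) * \<epsilon>) (at_right 0)"
  proof eventually_elim
    case (elim \<epsilon>)
    have "norm (a - b) \<le> norm (f \<epsilon> - a) + norm (g \<epsilon> - b)"
      using elim(3) norm_triangle_ineq4[of "f \<epsilon> - b" "f \<epsilon> - a"] by (simp add: norm_minus_commute)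
    with elim show ?case by (simp add: distrib_right)
  qed
  moreover have "((\<lambda>\<epsilon>. (C + D) * \<epsilon>) \<longlongrightarrow> 0) (at_right 0)"
    by (auto intro!: tendsto_eq_intros)
  ultimately have "norm (a - b) \<le> 0"
    by (intro tendsto_le[OF trivial_limit_at_right_real _ tendsto_const])
  then show ?thesis by simp
qed

lemma lin_approx_bigo_power_div:
  assumes "(\<lambda>\<epsilon>. norm (R \<epsilon>)) \<in> O[at_right 0](\<lambda>\<epsilon>. \<epsilon> ^ Suc k)"
  shows "lin_approx (\<lambda>\<epsilon>. R \<epsilon> /\<^sub>R \<epsilon> ^ k) 0"
proof -
  obtain C where "eventually (\<lambda>\<epsilon>. norm (norm (R \<epsilon>)) \<le> C * norm (\<epsilon> ^ Suc k)) (at_right 0)"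
    using assms by (elim landau_o.bigE)
  then have "eventually (\<lambda>\<epsilon>. norm (R \<epsilon> /\<^sub>R \<epsilon> ^ k - 0) \<le> C * \<epsilon>) (at_right 0)"
    using eventually_at_right_0_unit
  proof eventually_elim
    case (elim \<epsilon>)
    then have "norm (R \<epsilon>) \<le> (C * \<epsilon>) * \<epsilon> ^ k"
      by (simp add: abs_of_pos mult_ac)
    moreover have "0 < \<epsilon> ^ k"
      using elim by simp
    ultimately show ?case
      by (simp add: pos_divide_le_eq divide_inverse_commute[symmetric])
  qed
  then show ?thesis by (rule lin_approxI)
qed

lemma lin_approx_quadratic_expansion:
  assumes "(\<lambda>\<epsilon>. norm (g \<epsilon> - (a + \<epsilon> *\<^sub>R b + \<epsilon>\<^sup>2 *\<^sub>R c))) \<in> O[at_right 0](\<lambda>\<epsilon>. \<epsilon> ^ 3)"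
  shows "lin_approx g a"
proof -
  define R where "R \<epsilon> = g \<epsilon> - (a + \<epsilon> *\<^sub>R b + \<epsilon>\<^sup>2 *\<^sub>R c)" for \<epsilon>
  have "lin_approx (\<lambda>\<epsilon>. R \<epsilon> /\<^sub>R \<epsilon>\<^sup>2) 0"
    using lin_approx_bigo_power_div[of R 2] assms by (simp add: R_def numeral_3_eq_3)
  then have "lin_approx (\<lambda>\<epsilon>. a + \<epsilon> *\<^sub>R b + \<epsilon>\<^sup>2 *\<^sub>R c + \<epsilon>\<^sup>2 *\<^sub>R (R \<epsilon> /\<^sub>R \<epsilon>\<^sup>2))
      (a + 0 *\<^sub>R b + 0 *\<^sub>R c + 0 *\<^sub>R 0)"
    by (intro lin_approx_add lin_approx_scaleR lin_approx_const lin_approx_ident lin_approx_power) simp_all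
  moreover have "eventually (\<lambda>\<epsilon>. a + \<epsilon> *\<^sub>R b + \<epsilon>\<^sup>2 *\<^sub>R c + \<epsilon>\<^sup>2 *\<^sub>R (R \<epsilon> /\<^sub>R \<epsilon>\<^sup>2) = g \<epsilon>)
      (at_right 0)"
    using eventually_at_right_0_unit by eventually_elim (simp add: R_def)
  ultimately show ?thesis
    using lin_approx_cong by fastforce
qed

lemma pdx_eq_derivative:
  assumes "(f has_derivative f') (at x)"
  shows "pdx i f x = f' (axis i 1)"
  using assms unfolding pdx_def by (metis frechet_derivative_at)

lemma pdx_const [simp]: "pdx i (\<lambda>y. c) x = 0"
  by (simp add: pdx_def)

lemma pdx_add:
  assumes "f differentiable (at x)" "g differentiable (at x)"
  shows "pdx i (\<lambda>y. f y + g y) x = pdx i f x + pdx i g x"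
  using assms by (subst pdx_eq_derivative[OF has_derivative_add]) (auto simp: pdx_def frechet_derivative_works)

lemma pdx_scaleR:
  assumes "f differentiable (at x)"
  shows "pdx i (\<lambda>y. a *\<^sub>R f y) x = a *\<^sub>R pdx i f x"
  using assms by (subst pdx_eq_derivative[OF has_derivative_scaleR_right]) (auto simp: pdx_def frechet_derivative_works)

lemma pdx_diff:
  assumes "f differentiable (at x)" "g differentiable (at x)"
  shows "pdx i (\<lambda>y. f y - g y) x = pdx i f x - pdx i g x"
  using assms by (subst pdx_eq_derivative[OF has_derivative_diff]) (auto simp: pdx_def frechet_derivative_works)

lemma
  assumes "bounded_bilinear pr" "f differentiable (at x)" "g differentiable (at x)"
  shows differentiable_bilinear: "(\<lambda>y. pr (f y) (g y)) differentiable (at x)"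
    and pdx_bilinear: "pdx i (\<lambda>y. pr (f y) (g y)) x = pr (f x) (pdx i g x) + pr (pdx i f x) (g x)"
proof -
  interpret bounded_bilinear pr by fact
  have deriv: "((\<lambda>y. pr (f y) (g y)) has_derivative
      (\<lambda>h. pr (f x) (frechet_derivative g (at x) h) + pr (frechet_derivative f (at x) h) (g x))) (at x)"
    using assms(2,3) by (intro FDERIV frechet_derivative_works[THEN iffD1])
  then show "(\<lambda>y. pr (f y) (g y)) differentiable (at x)"
    by (rule differentiableI)
  show "pdx i (\<lambda>y. pr (f y) (g y)) x = pr (f x) (pdx i g x) + pr (pdx i f x) (g x)"
    using pdx_eq_derivative[OF deriv] by (simp add: pdx_def)
qed

lemma divm_scaleR_mat:
  fixes f :: "real^'d::finite \<Rightarrow> real"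
  assumes "f differentiable (at x)"
  shows "divm (\<lambda>y. f y *\<^sub>R mat 1) x = (\<chi> j. pdx j f x)"
proof -
  have pdx_I: "pdx i (\<lambda>y. f y *\<^sub>R (mat 1 :: real^'d^'d)) x = pdx i f x *\<^sub>R mat 1" for i
    using pdx_bilinear[OF bounded_bilinear_scaleR assms differentiable_const] by simp
  show ?thesis
    unfolding divm_def pdx_I by (simp add: vec_eq_iff mat_def if_distrib cong: if_cong)
qed

lemma bounded_bilinear_outer: "bounded_bilinear (outer :: real^'d::finite \<Rightarrow> real^'d \<Rightarrow> real^'d^'d)"
proof -
  have "bilinear (outer :: real^'d \<Rightarrow> real^'d \<Rightarrow> real^'d^'d)"
    unfolding bilinear_def outer_def by (auto intro!: linearI simp: vec_eq_iff algebra_simps)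
  then show ?thesis
    by (simp add: bilinear_conv_bounded_bilinear)
qed

definition C1_lin_approx ::
    "(real \<Rightarrow> real^'d::finite \<Rightarrow> 'b::real_normed_vector) \<Rightarrow> (real^'d \<Rightarrow> 'b) \<Rightarrow> real^'d \<Rightarrow> bool" where
  "C1_lin_approx F G x \<longleftrightarrow>
     eventually (\<lambda>\<epsilon>. F \<epsilon> differentiable (at x)) (at_right 0) \<and> G differentiable (at x) \<and>
     lin_approx (\<lambda>\<epsilon>. F \<epsilon> x) (G x) \<and> (\<forall>i. lin_approx (\<lambda>\<epsilon>. pdx i (F \<epsilon>) x) (pdx i G x))"

lemma C1_lin_approx_value: "C1_lin_approx F G x \<Longrightarrow> lin_approx (\<lambda>\<epsilon>. F \<epsilon> x) (G x)"
  unfolding C1_lin_approx_def by blast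

lemma C1_lin_approx_const: "lin_approx s c \<Longrightarrow> C1_lin_approx (\<lambda>\<epsilon> y. s \<epsilon>) (\<lambda>y. c) x"
  unfolding C1_lin_approx_def by (simp add: lin_approx_const)

lemma C1_lin_approx_cong:
  assumes "C1_lin_approx F G x" "eventually (\<lambda>\<epsilon>. F \<epsilon> = F' \<epsilon>) (at_right 0)" "G = G'"
  shows "C1_lin_approx F' G' x"
proof -
  have "eventually (\<lambda>\<epsilon>. F \<epsilon> x = F' \<epsilon> x) (at_right 0)"
    and "eventually (\<lambda>\<epsilon>. pdx i (F \<epsilon>) x = pdx i (F' \<epsilon>) x) (at_right 0)" for i
    using assms(2) by (auto elim: eventually_mono)
  with assms show ?thesis
    unfolding C1_lin_approx_def by (auto elim: eventually_elim2 intro: lin_approx_cong)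
qed

lemma C1_lin_approx_add:
  assumes F: "C1_lin_approx F G x" and H: "C1_lin_approx H K x"
  shows "C1_lin_approx (\<lambda>\<epsilon> y. F \<epsilon> y + H \<epsilon> y) (\<lambda>y. G y + K y) x"
proof -
  have diff: "eventually (\<lambda>\<epsilon>. F \<epsilon> differentiable (at x) \<and> H \<epsilon> differentiable (at x)) (at_right 0)"
    using F H unfolding C1_lin_approx_def by (simp add: eventually_conj_iff)
  have "lin_approx (\<lambda>\<epsilon>. pdx i (\<lambda>y. F \<epsilon> y + H \<epsilon> y) x) (pdx i (\<lambda>y. G y + K y) x)" for i
  proof -
    have "lin_approx (\<lambda>\<epsilon>. pdx i (F \<epsilon>) x + pdx i (H \<epsilon>) x) (pdx i G x + pdx i K x)"
      using F H unfolding C1_lin_approx_def by (intro lin_approx_add) auto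
    moreover have "eventually (\<lambda>\<epsilon>. pdx i (F \<epsilon>) x + pdx i (H \<epsilon>) x = pdx i (\<lambda>y. F \<epsilon> y + H \<epsilon> y) x)
        (at_right 0)"
      using diff by eventually_elim (simp add: pdx_add)
    ultimately show ?thesis
      using F H unfolding C1_lin_approx_def by (simp add: pdx_add lin_approx_cong)
  qed
  moreover have "eventually (\<lambda>\<epsilon>. (\<lambda>y. F \<epsilon> y + H \<epsilon> y) differentiable (at x)) (at_right 0)"
    using diff by eventually_elim simp
  moreover have "lin_approx (\<lambda>\<epsilon>. F \<epsilon> x + H \<epsilon> x) (G x + K x)"
    using F H unfolding C1_lin_approx_def by (intro lin_approx_add) auto
  ultimately show ?thesis
    using F H by (simp add: C1_lin_approx_def)
qed

lemma C1_lin_approx_bilinear: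
  assumes "bounded_bilinear pr" and F: "C1_lin_approx F G x" and H: "C1_lin_approx H K x"
  shows "C1_lin_approx (\<lambda>\<epsilon> y. pr (F \<epsilon> y) (H \<epsilon> y)) (\<lambda>y. pr (G y) (K y)) x"
proof -
  note bb = \<open>bounded_bilinear pr\<close>
  have diff: "eventually (\<lambda>\<epsilon>. F \<epsilon> differentiable (at x) \<and> H \<epsilon> differentiable (at x)) (at_right 0)"
    using F H unfolding C1_lin_approx_def by (simp add: eventually_conj_iff)
  have "lin_approx (\<lambda>\<epsilon>. pdx i (\<lambda>y. pr (F \<epsilon> y) (H \<epsilon> y)) x) (pdx i (\<lambda>y. pr (G y) (K y)) x)" for i
  proof -
    have "lin_approx (\<lambda>\<epsilon>. pr (F \<epsilon> x) (pdx i (H \<epsilon>) x) + pr (pdx i (F \<epsilon>) x) (H \<epsilon> x))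
        (pr (G x) (pdx i K x) + pr (pdx i G x) (K x))"
      using F H unfolding C1_lin_approx_def by (intro lin_approx_add lin_approx_bilinear[OF bb]) auto
    moreover have "eventually (\<lambda>\<epsilon>. pr (F \<epsilon> x) (pdx i (H \<epsilon>) x) + pr (pdx i (F \<epsilon>) x) (H \<epsilon> x)
        = pdx i (\<lambda>y. pr (F \<epsilon> y) (H \<epsilon> y)) x) (at_right 0)"
      using diff by eventually_elim (simp add: pdx_bilinear[OF bb])
    ultimately show ?thesis
      using F H unfolding C1_lin_approx_def by (simp add: pdx_bilinear[OF bb] lin_approx_cong)
  qed
  moreover have "eventually (\<lambda>\<epsilon>. (\<lambda>y. pr (F \<epsilon> y) (H \<epsilon> y)) differentiable (at x)) (at_right 0)"
    using diff by eventually_elim (simp add: differentiable_bilinear[OF bb])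
  moreover have "(\<lambda>y. pr (G y) (K y)) differentiable (at x)"
    using F H unfolding C1_lin_approx_def by (simp add: differentiable_bilinear[OF bb])
  moreover have "lin_approx (\<lambda>\<epsilon>. pr (F \<epsilon> x) (H \<epsilon> x)) (pr (G x) (K x))"
    using F H unfolding C1_lin_approx_def by (intro lin_approx_bilinear[OF bb]) auto
  ultimately show ?thesis
    using F H by (simp add: C1_lin_approx_def)
qed

lemma C1_lin_approx_mult:
  "C1_lin_approx F G x \<Longrightarrow> C1_lin_approx H K x
    \<Longrightarrow> C1_lin_approx (\<lambda>\<epsilon> y. F \<epsilon> y * H \<epsilon> y) (\<lambda>y. G y * K y :: real) x"
  by (rule C1_lin_approx_bilinear[OF bounded_bilinear_mult])

lemma C1_lin_approx_scaleR:
  "C1_lin_approx F G x \<Longrightarrow> C1_lin_approx H K x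
    \<Longrightarrow> C1_lin_approx (\<lambda>\<epsilon> y. F \<epsilon> y *\<^sub>R H \<epsilon> y) (\<lambda>y. G y *\<^sub>R K y) x"
  by (rule C1_lin_approx_bilinear[OF bounded_bilinear_scaleR])

lemma C1_lin_approx_inner:
  "C1_lin_approx F G x \<Longrightarrow> C1_lin_approx H K x
    \<Longrightarrow> C1_lin_approx (\<lambda>\<epsilon> y. inner (F \<epsilon> y) (H \<epsilon> y)) (\<lambda>y. inner (G y) (K y)) x"
  by (rule C1_lin_approx_bilinear[OF bounded_bilinear_inner])

lemma C1_lin_approx_outer:
  "C1_lin_approx F G x \<Longrightarrow> C1_lin_approx H K x
    \<Longrightarrow> C1_lin_approx (\<lambda>\<epsilon> y. outer (F \<epsilon> y) (H \<epsilon> y)) (\<lambda>y. outer (G y) (K y)) x"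
  by (rule C1_lin_approx_bilinear[OF bounded_bilinear_outer])

lemma C1_lin_approx_diff:
  assumes "C1_lin_approx F G x" "C1_lin_approx H K x"
  shows "C1_lin_approx (\<lambda>\<epsilon> y. F \<epsilon> y - H \<epsilon> y) (\<lambda>y. G y - K y) x"
proof -
  have "C1_lin_approx (\<lambda>\<epsilon> y. F \<epsilon> y + (-1) *\<^sub>R H \<epsilon> y) (\<lambda>y. G y + (-1) *\<^sub>R K y) x"
    by (intro C1_lin_approx_add C1_lin_approx_scaleR C1_lin_approx_const lin_approx_const assms)
  then show ?thesis
    by (rule C1_lin_approx_cong) simp_all
qed

lemma lin_approx_divv:
  fixes F :: "real \<Rightarrow> real^'d::finite \<Rightarrow> real^'d"
  shows "C1_lin_approx F G x \<Longrightarrow> lin_approx (\<lambda>\<epsilon>. divv (F \<epsilon>) x) (divv G x)"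
  unfolding divv_def C1_lin_approx_def by (intro lin_approx_sum lin_approx_nth) auto

lemma lin_approx_divm:
  fixes F :: "real \<Rightarrow> real^'d::finite \<Rightarrow> real^'d^'d"
  shows "C1_lin_approx F G x \<Longrightarrow> lin_approx (\<lambda>\<epsilon>. divm (F \<epsilon>) x) (divm G x)"
  unfolding divm_def C1_lin_approx_def
  by (intro lin_approx_vec) (simp, intro lin_approx_sum lin_approx_nth, auto)

lemma field_expansion_pdx_bigo:
  assumes "field_expansion f c"
  shows "(\<lambda>\<epsilon>. norm (pdx i (f \<epsilon>) x - (pdx i (c 0) x + \<epsilon> *\<^sub>R pdx i (c 1) x + \<epsilon>\<^sup>2 *\<^sub>R pdx i (c 2) x)))
           \<in> O[at_right 0](\<lambda>\<epsilon>. \<epsilon> ^ 3)"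
proof -
  have f_diff: "\<forall>\<epsilon>\<in>{0<..1}. f \<epsilon> differentiable (at x)"
    and c_diff: "c 0 differentiable (at x)" "c 1 differentiable (at x)" "c 2 differentiable (at x)"
    and remainder: "(\<lambda>\<epsilon>. norm (pdx i (\<lambda>y. f \<epsilon> y - (c 0 y + \<epsilon> *\<^sub>R c 1 y + \<epsilon>\<^sup>2 *\<^sub>R c 2 y)) x))
           \<in> O[at_right 0](\<lambda>\<epsilon>. \<epsilon> ^ 3)"
    using assms unfolding field_expansion_def by auto
  have pdx_remainder: "eventually (\<lambda>\<epsilon>. norm (pdx i (\<lambda>y. f \<epsilon> y - (c 0 y + \<epsilon> *\<^sub>R c 1 y + \<epsilon>\<^sup>2 *\<^sub>R c 2 y)) x)
      = norm (pdx i (f \<epsilon>) x - (pdx i (c 0) x + \<epsilon> *\<^sub>R pdx i (c 1) x + \<epsilon>\<^sup>2 *\<^sub>R pdx i (c 2) x))) (at_right 0)"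
    using eventually_at_right_0_unit
  proof eventually_elim
    case (elim \<epsilon>)
    have c1: "(\<lambda>y. \<epsilon> *\<^sub>R c 1 y) differentiable (at x)" and c2: "(\<lambda>y. \<epsilon>\<^sup>2 *\<^sub>R c 2 y) differentiable (at x)"
      using c_diff by (simp_all add: differentiable_scaleR)
    have c01: "(\<lambda>y. c 0 y + \<epsilon> *\<^sub>R c 1 y) differentiable (at x)"
      using c_diff(1) c1 by (rule differentiable_add)
    have "pdx i (\<lambda>y. c 0 y + \<epsilon> *\<^sub>R c 1 y + \<epsilon>\<^sup>2 *\<^sub>R c 2 y) x
        = pdx i (c 0) x + \<epsilon> *\<^sub>R pdx i (c 1) x + \<epsilon>\<^sup>2 *\<^sub>R pdx i (c 2) x"
      by (simp only: pdx_add[OF c01 c2] pdx_add[OF c_diff(1) c1] pdx_scaleR[OF c_diff(2)] pdx_scaleR[OF c_diff(3)])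
    moreover have "pdx i (\<lambda>y. f \<epsilon> y - (c 0 y + \<epsilon> *\<^sub>R c 1 y + \<epsilon>\<^sup>2 *\<^sub>R c 2 y)) x
        = pdx i (f \<epsilon>) x - pdx i (\<lambda>y. c 0 y + \<epsilon> *\<^sub>R c 1 y + \<epsilon>\<^sup>2 *\<^sub>R c 2 y) x"
      using f_diff elim c01 c2 by (intro pdx_diff) (auto intro: differentiable_add)
    ultimately show ?case by simp
  qed
  show ?thesis
    using landau_o.big.in_cong[OF pdx_remainder] remainder by simp
qed

lemma field_expansion_C1_lin_approx:
  assumes "field_expansion f c"
  shows "C1_lin_approx f (c 0) x"
proof -
  have "eventually (\<lambda>\<epsilon>. f \<epsilon> differentiable (at x)) (at_right 0)"
    using eventually_at_right_0_unit assms unfolding field_expansion_def by (auto elim: eventually_mono)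
  moreover have "c 0 differentiable (at x)"
    using assms unfolding field_expansion_def by auto
  moreover have "lin_approx (\<lambda>\<epsilon>. f \<epsilon> x) (c 0 x)"
    using assms unfolding field_expansion_def by (blast intro: lin_approx_quadratic_expansion)
  moreover have "lin_approx (\<lambda>\<epsilon>. pdx i (f \<epsilon>) x) (pdx i (c 0) x)" for i
    by (rule lin_approx_quadratic_expansion[OF field_expansion_pdx_bigo[OF assms]])
  ultimately show ?thesis
    unfolding C1_lin_approx_def by blast
qed

lemma field_expansion_lin_approx: "field_expansion f c \<Longrightarrow> lin_approx (\<lambda>\<epsilon>. f \<epsilon> x) (c 0 x)"
  by (rule C1_lin_approx_value[OF field_expansion_C1_lin_approx])

lemma const_expansion_lin_approx: "const_expansion f c \<Longrightarrow> lin_approx f (c 0)"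
  unfolding const_expansion_def by (rule lin_approx_quadratic_expansion) simp

lemma C1_lin_approx_total_energy:
  assumes "C1_lin_approx \<rho> r0 x" "C1_lin_approx u v0 x" "C1_lin_approx p p0 x"
  shows "C1_lin_approx (\<lambda>\<epsilon> y. total_energy \<gamma> \<epsilon> (\<rho> \<epsilon> y) (u \<epsilon> y) (p \<epsilon> y)) (\<lambda>y. p0 y / (\<gamma> - 1)) x"
proof -
  have "C1_lin_approx (\<lambda>\<epsilon> y. 1 / (\<gamma> - 1) * p \<epsilon> y + \<epsilon>\<^sup>2 * (1 / 2 * \<rho> \<epsilon> y * inner (u \<epsilon> y) (u \<epsilon> y)))
      (\<lambda>y. 1 / (\<gamma> - 1) * p0 y + 0 * (1 / 2 * r0 y * inner (v0 y) (v0 y))) x"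
    by (intro C1_lin_approx_add C1_lin_approx_mult C1_lin_approx_inner C1_lin_approx_const
        lin_approx_const lin_approx_power assms) simp_all
  then show ?thesis
    by (rule C1_lin_approx_cong)
      (simp_all add: total_energy_def power2_norm_eq_inner fun_eq_iff field_simps)
qed

lemma C1_lin_approx_Pi_fun:
  assumes "C1_lin_approx p p0 x" "lin_approx pinf q0"
  shows "C1_lin_approx (\<lambda>\<epsilon> y. Pi_fun \<epsilon> (p \<epsilon> y) (pinf \<epsilon>)) (\<lambda>y. q0) x"
proof -
  have "C1_lin_approx (\<lambda>\<epsilon> y. \<epsilon>\<^sup>2 * p \<epsilon> y + (1 - \<epsilon>\<^sup>2) * pinf \<epsilon>) (\<lambda>y. 0 * p0 y + (1 - 0) * q0) x"
    by (intro C1_lin_approx_add C1_lin_approx_mult C1_lin_approx_const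
        lin_approx_diff lin_approx_const lin_approx_power assms) simp_all
  then show ?thesis
    by (rule C1_lin_approx_cong) (simp_all add: Pi_fun_def)
qed

lemma field_expansion_stiff_pdx:
  fixes f :: "real \<Rightarrow> real^'d::finite \<Rightarrow> real"
  assumes "field_expansion f c"
  shows "lin_approx (\<lambda>\<epsilon>. (1 - \<epsilon>\<^sup>2) / \<epsilon>\<^sup>2 * pdx i (f \<epsilon>) x
           - (pdx i (c 0) x / \<epsilon>\<^sup>2 + pdx i (c 1) x / \<epsilon> + (pdx i (c 2) x - pdx i (c 0) x))) 0"
proof -
  define R where "R \<epsilon> = pdx i (f \<epsilon>) x - (pdx i (c 0) x + \<epsilon> * pdx i (c 1) x + \<epsilon>\<^sup>2 * pdx i (c 2) x)" for \<epsilon>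
  \<comment> \<open>the gradient remainder is \<open>O(\<epsilon>\<^sup>3)\<close>, so it is still \<open>O(\<epsilon>)\<close> after division by \<open>\<epsilon>\<^sup>2\<close>\<close>
  have "lin_approx (\<lambda>\<epsilon>. R \<epsilon> /\<^sub>R \<epsilon>\<^sup>2) 0"
    using lin_approx_bigo_power_div[of R 2] field_expansion_pdx_bigo[OF assms, of i x]
    by (simp add: R_def numeral_3_eq_3)
  then have "lin_approx (\<lambda>\<epsilon>. (1 - \<epsilon>\<^sup>2) * (R \<epsilon> /\<^sub>R \<epsilon>\<^sup>2) - \<epsilon> * pdx i (c 1) x - \<epsilon>\<^sup>2 * pdx i (c 2) x)
      ((1 - 0) * 0 - 0 * pdx i (c 1) x - 0 * pdx i (c 2) x)"
    by (intro lin_approx_diff lin_approx_mult lin_approx_const lin_approx_ident lin_approx_power) simp_all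
  moreover have "eventually (\<lambda>\<epsilon>. (1 - \<epsilon>\<^sup>2) * (R \<epsilon> /\<^sub>R \<epsilon>\<^sup>2) - \<epsilon> * pdx i (c 1) x - \<epsilon>\<^sup>2 * pdx i (c 2) x
      = (1 - \<epsilon>\<^sup>2) / \<epsilon>\<^sup>2 * pdx i (f \<epsilon>) x
           - (pdx i (c 0) x / \<epsilon>\<^sup>2 + pdx i (c 1) x / \<epsilon> + (pdx i (c 2) x - pdx i (c 0) x))) (at_right 0)"
    using eventually_at_right_0_unit
    by eventually_elim (simp add: R_def field_simps power2_eq_square)
  ultimately show ?thesis
    using lin_approx_cong by fastforce
qed

lemma field_expansion_stiff_divm:
  fixes f :: "real \<Rightarrow> real^'d::finite \<Rightarrow> real"
  assumes "field_expansion f c"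
  shows "lin_approx (\<lambda>\<epsilon>. divm (\<lambda>y. ((1 - \<epsilon>\<^sup>2) / \<epsilon>\<^sup>2 * f \<epsilon> y) *\<^sub>R mat 1) x
           - ((1 / \<epsilon>\<^sup>2) *\<^sub>R divm (\<lambda>y. c 0 y *\<^sub>R mat 1) x + (1 / \<epsilon>) *\<^sub>R divm (\<lambda>y. c 1 y *\<^sub>R mat 1) x
              + divm (\<lambda>y. (c 2 y - c 0 y) *\<^sub>R mat 1) x)) 0"
proof (rule lin_approx_vec)
  fix j
  have f_diff: "\<forall>\<epsilon>\<in>{0<..1}. f \<epsilon> differentiable (at x)"
    and c_diff: "c 0 differentiable (at x)" "c 1 differentiable (at x)" "c 2 differentiable (at x)"
    using assms unfolding field_expansion_def by auto
  have "eventually (\<lambda>\<epsilon>. (1 - \<epsilon>\<^sup>2) / \<epsilon>\<^sup>2 * pdx j (f \<epsilon>) x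
         - (pdx j (c 0) x / \<epsilon>\<^sup>2 + pdx j (c 1) x / \<epsilon> + (pdx j (c 2) x - pdx j (c 0) x))
      = (divm (\<lambda>y. ((1 - \<epsilon>\<^sup>2) / \<epsilon>\<^sup>2 * f \<epsilon> y) *\<^sub>R mat 1) x
           - ((1 / \<epsilon>\<^sup>2) *\<^sub>R divm (\<lambda>y. c 0 y *\<^sub>R mat 1) x + (1 / \<epsilon>) *\<^sub>R divm (\<lambda>y. c 1 y *\<^sub>R mat 1) x
              + divm (\<lambda>y. (c 2 y - c 0 y) *\<^sub>R mat 1) x)) $ j) (at_right 0)"
    using eventually_at_right_0_unit
  proof eventually_elim
    case (elim \<epsilon>)
    then have "f \<epsilon> differentiable (at x)"
      using f_diff by blast
    then show ?case
      using c_diff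
      by (simp add: divm_scaleR_mat pdx_bilinear[OF bounded_bilinear_mult] pdx_diff divide_inverse)
  qed
  with field_expansion_stiff_pdx[OF assms, of j x]
  show "lin_approx (\<lambda>\<epsilon>. (divm (\<lambda>y. ((1 - \<epsilon>\<^sup>2) / \<epsilon>\<^sup>2 * f \<epsilon> y) *\<^sub>R mat 1) x
           - ((1 / \<epsilon>\<^sup>2) *\<^sub>R divm (\<lambda>y. c 0 y *\<^sub>R mat 1) x + (1 / \<epsilon>) *\<^sub>R divm (\<lambda>y. c 1 y *\<^sub>R mat 1) x
              + divm (\<lambda>y. (c 2 y - c 0 y) *\<^sub>R mat 1) x)) $ j) (0 $ j)"
    using lin_approx_cong by fastforce
qed

lemma mass_update_limit:
  assumes "field_expansion \<rho> r" "field_expansion \<rho>' r'" "field_expansion u v"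
    and "\<forall>\<epsilon>\<in>{0<..1}. \<forall>x. \<rho>' \<epsilon> x = \<rho> \<epsilon> x - \<Delta>t * divv (\<lambda>y. \<rho> \<epsilon> y *\<^sub>R u \<epsilon> y) x"
  shows "r' 0 x = r 0 x - \<Delta>t * divv (\<lambda>y. r 0 y *\<^sub>R v 0 y) x"
proof (rule lin_approx_unique)
  show "lin_approx (\<lambda>\<epsilon>. \<rho>' \<epsilon> x) (r' 0 x)"
    by (rule field_expansion_lin_approx[OF assms(2)])
  show "lin_approx (\<lambda>\<epsilon>. \<rho> \<epsilon> x - \<Delta>t * divv (\<lambda>y. \<rho> \<epsilon> y *\<^sub>R u \<epsilon> y) x)
      (r 0 x - \<Delta>t * divv (\<lambda>y. r 0 y *\<^sub>R v 0 y) x)"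
    by (intro lin_approx_diff lin_approx_mult lin_approx_const lin_approx_divv C1_lin_approx_scaleR
        field_expansion_lin_approx field_expansion_C1_lin_approx assms)
  show "eventually (\<lambda>\<epsilon>. \<rho>' \<epsilon> x = \<rho> \<epsilon> x - \<Delta>t * divv (\<lambda>y. \<rho> \<epsilon> y *\<^sub>R u \<epsilon> y) x) (at_right 0)"
    using eventually_at_right_0_unit assms(4) by (auto elim: eventually_mono)
qed

lemma energy_update_limit:
  assumes "field_expansion \<rho> r" "field_expansion \<rho>' r'" "field_expansion u v" "field_expansion u' v'"
    and "field_expansion p pc" "field_expansion p' pc'"
    and "const_expansion pinf q" "const_expansion pinf' q'"
    and "\<forall>\<epsilon>\<in>{0<..1}. \<forall>x.
          total_energy \<gamma> \<epsilon> (\<rho>' \<epsilon> x) (u' \<epsilon> x) (p' \<epsilon> x)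
          = total_energy \<gamma> \<epsilon> (\<rho> \<epsilon> x) (u \<epsilon> x) (p \<epsilon> x)
            - \<Delta>t * divv (\<lambda>y. (total_energy \<gamma> \<epsilon> (\<rho> \<epsilon> y) (u \<epsilon> y) (p \<epsilon> y)
                                 + Pi_fun \<epsilon> (p \<epsilon> y) (pinf \<epsilon>)) *\<^sub>R u \<epsilon> y) x
            - \<Delta>t * divv (\<lambda>y. (p' \<epsilon> y - Pi_fun \<epsilon> (p' \<epsilon> y) (pinf' \<epsilon>)) *\<^sub>R u' \<epsilon> y) x"
  shows "pc' 0 x / (\<gamma> - 1) = pc 0 x / (\<gamma> - 1)
           - \<Delta>t * (divv (\<lambda>y. (pc 0 y / (\<gamma> - 1) + q 0) *\<^sub>R v 0 y) x
                   + divv (\<lambda>y. (pc' 0 y - q' 0) *\<^sub>R v' 0 y) x)"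
proof -
  note C1 = field_expansion_C1_lin_approx[OF assms(1)] field_expansion_C1_lin_approx[OF assms(2)]
    field_expansion_C1_lin_approx[OF assms(3)] field_expansion_C1_lin_approx[OF assms(4)]
    field_expansion_C1_lin_approx[OF assms(5)] field_expansion_C1_lin_approx[OF assms(6)]
    const_expansion_lin_approx[OF assms(7)] const_expansion_lin_approx[OF assms(8)]
  have "pc' 0 x / (\<gamma> - 1) = pc 0 x / (\<gamma> - 1)
           - \<Delta>t * divv (\<lambda>y. (pc 0 y / (\<gamma> - 1) + q 0) *\<^sub>R v 0 y) x
           - \<Delta>t * divv (\<lambda>y. (pc' 0 y - q' 0) *\<^sub>R v' 0 y) x"
  proof (rule lin_approx_unique)
    show "lin_approx (\<lambda>\<epsilon>. total_energy \<gamma> \<epsilon> (\<rho>' \<epsilon> x) (u' \<epsilon> x) (p' \<epsilon> x)) (pc' 0 x / (\<gamma> - 1))"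
      using C1_lin_approx_total_energy[OF C1(2,4,6)] by (rule C1_lin_approx_value)
    show "lin_approx (\<lambda>\<epsilon>. total_energy \<gamma> \<epsilon> (\<rho> \<epsilon> x) (u \<epsilon> x) (p \<epsilon> x)
            - \<Delta>t * divv (\<lambda>y. (total_energy \<gamma> \<epsilon> (\<rho> \<epsilon> y) (u \<epsilon> y) (p \<epsilon> y)
                                 + Pi_fun \<epsilon> (p \<epsilon> y) (pinf \<epsilon>)) *\<^sub>R u \<epsilon> y) x
            - \<Delta>t * divv (\<lambda>y. (p' \<epsilon> y - Pi_fun \<epsilon> (p' \<epsilon> y) (pinf' \<epsilon>)) *\<^sub>R u' \<epsilon> y) x)
        (pc 0 x / (\<gamma> - 1)
           - \<Delta>t * divv (\<lambda>y. (pc 0 y / (\<gamma> - 1) + q 0) *\<^sub>R v 0 y) x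
           - \<Delta>t * divv (\<lambda>y. (pc' 0 y - q' 0) *\<^sub>R v' 0 y) x)"
      by (intro lin_approx_diff lin_approx_mult lin_approx_const lin_approx_divv
          C1_lin_approx_scaleR C1_lin_approx_add C1_lin_approx_diff C1_lin_approx_Pi_fun
          C1_lin_approx_value[OF C1_lin_approx_total_energy[OF C1(1,3,5)]] C1_lin_approx_total_energy C1)
        (rule C1)+
    show "eventually (\<lambda>\<epsilon>. total_energy \<gamma> \<epsilon> (\<rho>' \<epsilon> x) (u' \<epsilon> x) (p' \<epsilon> x)
        = total_energy \<gamma> \<epsilon> (\<rho> \<epsilon> x) (u \<epsilon> x) (p \<epsilon> x)
            - \<Delta>t * divv (\<lambda>y. (total_energy \<gamma> \<epsilon> (\<rho> \<epsilon> y) (u \<epsilon> y) (p \<epsilon> y)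
                                 + Pi_fun \<epsilon> (p \<epsilon> y) (pinf \<epsilon>)) *\<^sub>R u \<epsilon> y) x
            - \<Delta>t * divv (\<lambda>y. (p' \<epsilon> y - Pi_fun \<epsilon> (p' \<epsilon> y) (pinf' \<epsilon>)) *\<^sub>R u' \<epsilon> y) x) (at_right 0)"
      using eventually_at_right_0_unit assms(9) by (auto elim: eventually_mono)
  qed
  then show ?thesis
    by (simp add: algebra_simps)
qed

lemma momentum_update_limit:
  fixes \<rho> \<rho>' p p' :: "real \<Rightarrow> real^'d::finite \<Rightarrow> real"
    and u u' :: "real \<Rightarrow> real^'d \<Rightarrow> real^'d"
  assumes "field_expansion \<rho> r" "field_expansion \<rho>' r'" "field_expansion u v" "field_expansion u' v'"
    and "field_expansion p pc" and exp_p': "field_expansion p' pc'"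
    and scheme: "\<forall>\<epsilon>\<in>{0<..1}. \<forall>x.
          \<rho>' \<epsilon> x *\<^sub>R u' \<epsilon> x = \<rho> \<epsilon> x *\<^sub>R u \<epsilon> x
            - \<Delta>t *\<^sub>R divm (\<lambda>y. \<rho> \<epsilon> y *\<^sub>R outer (u \<epsilon> y) (u \<epsilon> y) + p \<epsilon> y *\<^sub>R mat 1) x
            - \<Delta>t *\<^sub>R divm (\<lambda>y. ((1 - \<epsilon>\<^sup>2) / \<epsilon>\<^sup>2 * p' \<epsilon> y) *\<^sub>R mat 1) x"
  shows "lin_approx (\<lambda>\<epsilon>. r' 0 x *\<^sub>R v' 0 x -
           (r 0 x *\<^sub>R v 0 x
            - \<Delta>t *\<^sub>R (divm (\<lambda>y. r 0 y *\<^sub>R outer (v 0 y) (v 0 y) + pc 0 y *\<^sub>R mat 1) x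
                 + (1 / \<epsilon>\<^sup>2) *\<^sub>R divm (\<lambda>y. pc' 0 y *\<^sub>R mat 1) x
                 + (1 / \<epsilon>) *\<^sub>R divm (\<lambda>y. pc' 1 y *\<^sub>R mat 1) x
                 + divm (\<lambda>y. (pc' 2 y - pc' 0 y) *\<^sub>R mat 1) x))) 0"
proof -
  define A where "A \<epsilon> = \<rho> \<epsilon> x *\<^sub>R u \<epsilon> x
      - \<Delta>t *\<^sub>R divm (\<lambda>y. \<rho> \<epsilon> y *\<^sub>R outer (u \<epsilon> y) (u \<epsilon> y) + p \<epsilon> y *\<^sub>R mat 1) x" for \<epsilon>
  define A0 where "A0 = r 0 x *\<^sub>R v 0 x
      - \<Delta>t *\<^sub>R divm (\<lambda>y. r 0 y *\<^sub>R outer (v 0 y) (v 0 y) + pc 0 y *\<^sub>R (mat 1 :: real^'d^'d)) x"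
  define P where "P \<epsilon> = divm (\<lambda>y. ((1 - \<epsilon>\<^sup>2) / \<epsilon>\<^sup>2 * p' \<epsilon> y) *\<^sub>R (mat 1 :: real^'d^'d)) x" for \<epsilon>
  define T where "T \<epsilon> = (1 / \<epsilon>\<^sup>2) *\<^sub>R divm (\<lambda>y. pc' 0 y *\<^sub>R (mat 1 :: real^'d^'d)) x
      + (1 / \<epsilon>) *\<^sub>R divm (\<lambda>y. pc' 1 y *\<^sub>R mat 1) x
      + divm (\<lambda>y. (pc' 2 y - pc' 0 y) *\<^sub>R mat 1) x" for \<epsilon>
  have flux: "C1_lin_approx (\<lambda>\<epsilon> y. \<rho> \<epsilon> y *\<^sub>R outer (u \<epsilon> y) (u \<epsilon> y) + p \<epsilon> y *\<^sub>R mat 1)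
      (\<lambda>y. r 0 y *\<^sub>R outer (v 0 y) (v 0 y) + pc 0 y *\<^sub>R (mat 1 :: real^'d^'d)) x"
    by (intro C1_lin_approx_add C1_lin_approx_scaleR C1_lin_approx_outer C1_lin_approx_const
        lin_approx_const field_expansion_C1_lin_approx assms)
  have A: "lin_approx A A0"
    unfolding A_def[abs_def] A0_def
    by (intro lin_approx_diff lin_approx_scaleR lin_approx_const lin_approx_divm[OF flux]
        field_expansion_lin_approx assms)
  have momentum: "lin_approx (\<lambda>\<epsilon>. \<rho>' \<epsilon> x *\<^sub>R u' \<epsilon> x) (r' 0 x *\<^sub>R v' 0 x)"
    by (intro lin_approx_scaleR field_expansion_lin_approx assms)
  have stiff: "lin_approx (\<lambda>\<epsilon>. P \<epsilon> - T \<epsilon>) 0"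
    unfolding P_def T_def by (rule field_expansion_stiff_divm[OF exp_p'])
  have "lin_approx (\<lambda>\<epsilon>. (r' 0 x *\<^sub>R v' 0 x - \<rho>' \<epsilon> x *\<^sub>R u' \<epsilon> x) + (A \<epsilon> - A0) - \<Delta>t *\<^sub>R (P \<epsilon> - T \<epsilon>))
      ((r' 0 x *\<^sub>R v' 0 x - r' 0 x *\<^sub>R v' 0 x) + (A0 - A0) - \<Delta>t *\<^sub>R 0)"
    by (intro lin_approx_add lin_approx_diff lin_approx_scaleR lin_approx_const A momentum stiff)
  moreover have "eventually (\<lambda>\<epsilon>. (r' 0 x *\<^sub>R v' 0 x - \<rho>' \<epsilon> x *\<^sub>R u' \<epsilon> x) + (A \<epsilon> - A0)
      - \<Delta>t *\<^sub>R (P \<epsilon> - T \<epsilon>) = r' 0 x *\<^sub>R v' 0 x - (A0 - \<Delta>t *\<^sub>R T \<epsilon>)) (at_right 0)"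
    using eventually_at_right_0_unit
  proof eventually_elim
    case (elim \<epsilon>)
    then have "\<rho>' \<epsilon> x *\<^sub>R u' \<epsilon> x = A \<epsilon> - \<Delta>t *\<^sub>R P \<epsilon>"
      using scheme by (simp add: A_def P_def)
    then show ?case
      by (simp add: algebra_simps)
  qed
  ultimately show ?thesis
    unfolding A0_def T_def using lin_approx_cong by (fastforce simp: algebra_simps)
qed

theorem lemma3p2:
  fixes \<gamma> \<Delta>t :: real
    and \<rho> \<rho>' p p' :: "real \<Rightarrow> real^'d::finite \<Rightarrow> real"
    and u u' :: "real \<Rightarrow> real^'d \<Rightarrow> real^'d"
    and pinf pinf' :: "real \<Rightarrow> real"
    and r r' pc pc' :: "nat \<Rightarrow> real^'d \<Rightarrow> real"
    and v v' :: "nat \<Rightarrow> real^'d \<Rightarrow> real^'d"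
    and q q' :: "nat \<Rightarrow> real"
  assumes gamma: "\<gamma> > 1"
    and dt: "\<Delta>t > 0"
    and pinf_def: "\<forall>\<epsilon>\<in>{0<..1}. pinf \<epsilon> = (INF y. p \<epsilon> y)"
    and pinf'_def: "\<forall>\<epsilon>\<in>{0<..1}. pinf' \<epsilon> = (INF y. p' \<epsilon> y)"
    and exp_rho: "field_expansion \<rho> r" and exp_rho': "field_expansion \<rho>' r'"
    and exp_u: "field_expansion u v" and exp_u': "field_expansion u' v'"
    and exp_p: "field_expansion p pc" and exp_p': "field_expansion p' pc'"
    and exp_pinf: "const_expansion pinf q" and exp_pinf': "const_expansion pinf' q'"
    and scheme_mass: "\<forall>\<epsilon>\<in>{0<..1}. \<forall>x.
          \<rho>' \<epsilon> x = \<rho> \<epsilon> x - \<Delta>t * divv (\<lambda>y. \<rho> \<epsilon> y *\<^sub>R u \<epsilon> y) x"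
    and scheme_mom: "\<forall>\<epsilon>\<in>{0<..1}. \<forall>x.
          \<rho>' \<epsilon> x *\<^sub>R u' \<epsilon> x = \<rho> \<epsilon> x *\<^sub>R u \<epsilon> x
            - \<Delta>t *\<^sub>R divm (\<lambda>y. \<rho> \<epsilon> y *\<^sub>R outer (u \<epsilon> y) (u \<epsilon> y) + p \<epsilon> y *\<^sub>R mat 1) x
            - \<Delta>t *\<^sub>R divm (\<lambda>y. ((1 - \<epsilon>\<^sup>2) / \<epsilon>\<^sup>2 * p' \<epsilon> y) *\<^sub>R mat 1) x"
    and scheme_energy: "\<forall>\<epsilon>\<in>{0<..1}. \<forall>x.
          total_energy \<gamma> \<epsilon> (\<rho>' \<epsilon> x) (u' \<epsilon> x) (p' \<epsilon> x)
          = total_energy \<gamma> \<epsilon> (\<rho> \<epsilon> x) (u \<epsilon> x) (p \<epsilon> x)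
            - \<Delta>t * divv (\<lambda>y. (total_energy \<gamma> \<epsilon> (\<rho> \<epsilon> y) (u \<epsilon> y) (p \<epsilon> y)
                                 + Pi_fun \<epsilon> (p \<epsilon> y) (pinf \<epsilon>)) *\<^sub>R u \<epsilon> y) x
            - \<Delta>t * divv (\<lambda>y. (p' \<epsilon> y - Pi_fun \<epsilon> (p' \<epsilon> y) (pinf' \<epsilon>)) *\<^sub>R u' \<epsilon> y) x"
  shows "\<forall>x.
     (\<lambda>\<epsilon>. norm (r' 0 x - (r 0 x - \<Delta>t * divv (\<lambda>y. r 0 y *\<^sub>R v 0 y) x)))
        \<in> O[at_right 0](\<lambda>\<epsilon>. \<epsilon>)
   \<and> (\<lambda>\<epsilon>. norm (r' 0 x *\<^sub>R v' 0 x -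
         (r 0 x *\<^sub>R v 0 x
          - \<Delta>t *\<^sub>R (divm (\<lambda>y. r 0 y *\<^sub>R outer (v 0 y) (v 0 y) + pc 0 y *\<^sub>R mat 1) x
               + (1 / \<epsilon>\<^sup>2) *\<^sub>R divm (\<lambda>y. pc' 0 y *\<^sub>R mat 1) x
               + (1 / \<epsilon>) *\<^sub>R divm (\<lambda>y. pc' 1 y *\<^sub>R mat 1) x
               + divm (\<lambda>y. (pc' 2 y - pc' 0 y) *\<^sub>R mat 1) x))))
        \<in> O[at_right 0](\<lambda>\<epsilon>. \<epsilon>)
   \<and> (\<lambda>\<epsilon>. norm (pc' 0 x / (\<gamma> - 1) -
         (pc 0 x / (\<gamma> - 1)
          - \<Delta>t * (divv (\<lambda>y. (pc 0 y / (\<gamma> - 1) + q 0) *\<^sub>R v 0 y) x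
                  + divv (\<lambda>y. (pc' 0 y - q' 0) *\<^sub>R v' 0 y) x))))
        \<in> O[at_right 0](\<lambda>\<epsilon>. \<epsilon>)"
proof -
  \<comment> \<open>The mass and energy terms do not depend on \<open>\<epsilon>\<close>; they are \<open>O(\<epsilon>)\<close> because
    they vanish.\<close>
  note mass = mass_update_limit[OF exp_rho exp_rho' exp_u scheme_mass]
  note momentum = momentum_update_limit[OF exp_rho exp_rho' exp_u exp_u' exp_p exp_p' scheme_mom]
  note energy = energy_update_limit[OF exp_rho exp_rho' exp_u exp_u' exp_p exp_p' exp_pinf exp_pinf'
      scheme_energy]
  show ?thesis
    using mass momentum energy by (simp add: lin_approx_def)
qed

end
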